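(* Let $f:\mathbb{R}^n\to(-\infty,+\infty]$ be proper, lower semicontinuous and prox-bounded with threshold $\lambda_f>0$, let $0<\lambda<\lambda_f$ and let $x\in\operatorname{dom}f$. Then the following are equivalent: (a) $\partial_p^\lambda f(x)\neq\varnothing$; (b) $h_\lambda f(x)=f(x)$ and $x\in\operatorname{dom}\partial h_\lambda f$; (c) $\operatorname{conv}(f+\lambda^{-1}j)(x)=(f+\lambda^{-1}j)(x)$ and $x\in\operatorname{dom}\partial[\operatorname{conv}(f+\lambda^{-1}j)]$.
   Context: $j:=\frac12\|\cdot\|^2$. $e_\lambda f(x):=\inf_y\{f(y)+\frac1{2\lambda}\|y-x\|^2\}$; prox-bounded with threshold $\lambda_f=\sup\{\lambda>0: e_\lambda f(x)>-\infty\text{ for some }x\}$. $\partial_p^\lambda f(x)$ is the set of $v$ with $f(y)\ge f(x)+\langle v,y-x\rangle-\frac1{2\lambda}\|y-x\|^2$ for all $y$. The $\lambda$-proximal hull is $h_\lambda f:=-e_\lambda(-e_\lambda f)$ (equivalently $(f+\lambda^{-1}j)^{**}-\lambda^{-1}j$). $\operatorname{conv}g$ denotes the convex hull of a function $g$ (largest convex function below $g$). $\partial$ is the limiting subdifferential. *)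

theory Defs
  imports "HOL-Analysis.Analysis" "HOL-Library.Extended_Real"
begin

definition jfun :: "'a::euclidean_space \<Rightarrow> real" where
  "jfun x = (1/2) * (norm x)^2"

definition proper_fun :: "('a::euclidean_space \<Rightarrow> ereal) \<Rightarrow> bool" where
  "proper_fun f \<longleftrightarrow> (\<forall>x. f x \<noteq> -\<infinity>) \<and> (\<exists>x. f x \<noteq> \<infinity>)"

definition lsc_fun :: "('a::euclidean_space \<Rightarrow> ereal) \<Rightarrow> bool" where
  "lsc_fun f \<longleftrightarrow> (\<forall>x. f x \<le> Liminf (at x) f)"

definition edom :: "('a::euclidean_space \<Rightarrow> ereal) \<Rightarrow> 'a set" where
  "edom f = {x. f x < \<infinity>}"

definition moreau_env :: "real \<Rightarrow> ('a::euclidean_space \<Rightarrow> ereal) \<Rightarrow> 'a \<Rightarrow> ereal" where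
  "moreau_env l f x = (INF y. f y + ereal ((1 / (2 * l)) * (norm (y - x))^2))"

definition prox_bounded :: "('a::euclidean_space \<Rightarrow> ereal) \<Rightarrow> bool" where
  "prox_bounded f \<longleftrightarrow> (\<exists>l>0. \<exists>x. moreau_env l f x > -\<infinity>)"

definition prox_threshold :: "('a::euclidean_space \<Rightarrow> ereal) \<Rightarrow> ereal" where
  "prox_threshold f = Sup {ereal l | l. l > 0 \<and> (\<exists>x. moreau_env l f x > -\<infinity>)}"

definition prox_subdiff :: "real \<Rightarrow> ('a::euclidean_space \<Rightarrow> ereal) \<Rightarrow> 'a \<Rightarrow> 'a set" where
  "prox_subdiff l f x = {v. \<forall>y. f y \<ge> f x + ereal (inner v (y - x) - (1 / (2 * l)) * (norm (y - x))^2)}"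

definition prox_hull :: "real \<Rightarrow> ('a::euclidean_space \<Rightarrow> ereal) \<Rightarrow> 'a \<Rightarrow> ereal" where
  "prox_hull l f = (\<lambda>x. - moreau_env l (\<lambda>y. - moreau_env l f y) x)"

definition convex_efun :: "('a::euclidean_space \<Rightarrow> ereal) \<Rightarrow> bool" where
  "convex_efun g \<longleftrightarrow> convex {(x, a::real). g x \<le> ereal a}"

definition conv_fun :: "('a::euclidean_space \<Rightarrow> ereal) \<Rightarrow> 'a \<Rightarrow> ereal" where
  "conv_fun g x = (SUP h \<in> {h. convex_efun h \<and> (\<forall>y. h y \<le> g y)}. h x)"

text \<open>Regular (Frechet) subdifferential:
  liminf_{y -> x, y <> x} (f y - f x - <v, y - x>) / |y - x| >= 0, unfolded.\<close>
definition regular_subdiff :: "('a::euclidean_space \<Rightarrow> ereal) \<Rightarrow> 'a \<Rightarrow> 'a set" where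
  "regular_subdiff f x = {v. \<bar>f x\<bar> \<noteq> \<infinity> \<and>
     (\<forall>e>0. \<exists>d>0. \<forall>y. norm (y - x) < d \<longrightarrow>
        f y \<ge> f x + ereal (inner v (y - x) - e * norm (y - x)))}"

definition limiting_subdiff :: "('a::euclidean_space \<Rightarrow> ereal) \<Rightarrow> 'a \<Rightarrow> 'a set" where
  "limiting_subdiff f x = {v. \<bar>f x\<bar> \<noteq> \<infinity> \<and>
     (\<exists>xs vs. xs \<longlonglongrightarrow> x \<and> (\<lambda>k. f (xs k)) \<longlonglongrightarrow> f x \<and>
        (\<forall>k. vs k \<in> regular_subdiff f (xs k)) \<and> vs \<longlonglongrightarrow> v)}"

definition dom_subdiff :: "('a::euclidean_space \<Rightarrow> ereal) \<Rightarrow> 'a set" where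
  "dom_subdiff f = {x. limiting_subdiff f x \<noteq> {}}"

end

theory Submission
  imports Defs
begin

(*
  Write g = f + j/l. Expanding the square shows that v is an l-proximal subgradient of f
  at x iff the affine function through (x, g x) with slope v + x/l minorizes g.

  (a) ==> (b), (c): the quadratic minorant of f given by v has the form c - |. - z|^2/(2l),
  and every minorant of f of this form lies below h_l f = sup_z (e_l f z - |z - .|^2/(2l));
  likewise the affine minorant of g lies below conv g. So each hull agrees with f (resp. g)
  at x and inherits v (resp. v + x/l) as a regular subgradient there.

  (b), (c) ==> (a): h_l f + j/l (a supremum of affine functions) and conv g are convex
  minorants of g touching it at x. For a convex function every regular subgradient is a
  global one (compare with the convex combination along a short segment), and the global
  subgradient inequality survives the limit defining limiting subgradients. This yields
  an affine minorant of g touching at x.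
*)

lemma regular_subdiff_imp_dom_subdiff:
  assumes "v \<in> regular_subdiff F x"
  shows "x \<in> dom_subdiff F"
proof -
  have "v \<in> limiting_subdiff F x"
    using assms unfolding limiting_subdiff_def regular_subdiff_def
    by (intro CollectI conjI exI[of _ "\<lambda>_. x"] exI[of _ "\<lambda>_. v"]) auto
  then show ?thesis
    unfolding dom_subdiff_def by auto
qed

lemma quadratic_minorant_imp_regular_subdiff:
  assumes c: "0 \<le> c" and fin: "\<bar>F x\<bar> \<noteq> \<infinity>"
    and minorant: "\<And>y. F x + ereal (inner v (y - x) - c * (norm (y - x))\<^sup>2) \<le> F y"
  shows "v \<in> regular_subdiff F x"
  unfolding regular_subdiff_def
proof (intro CollectI conjI allI impI fin)
  fix e :: real
  assume e: "e > 0"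
  show "\<exists>d>0. \<forall>y. norm (y - x) < d \<longrightarrow> F x + ereal (inner v (y - x) - e * norm (y - x)) \<le> F y"
  proof (intro exI[of _ "e / (c + 1)"] conjI allI impI)
    show "e / (c + 1) > 0"
      using c e by simp
    fix y
    assume y: "norm (y - x) < e / (c + 1)"
    have "norm (y - x) * norm (y - x) \<le> e / (c + 1) * norm (y - x)"
      using y by (intro mult_right_mono) auto
    then have "c * (norm (y - x) * norm (y - x)) \<le> c * (e / (c + 1) * norm (y - x))"
      using c by (rule mult_left_mono)
    then have "c * (norm (y - x))\<^sup>2 \<le> c * (e / (c + 1)) * norm (y - x)"
      by (simp add: power2_eq_square mult.assoc)
    also have "\<dots> \<le> e * norm (y - x)"
      using c e by (intro mult_right_mono) (simp_all add: field_simps)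
    finally have "F x + ereal (inner v (y - x) - e * norm (y - x))
        \<le> F x + ereal (inner v (y - x) - c * (norm (y - x))\<^sup>2)"
      by (intro add_left_mono) simp
    also have "\<dots> \<le> F y"
      by (rule minorant)
    finally show "F x + ereal (inner v (y - x) - e * norm (y - x)) \<le> F y" .
  qed
qed

lemma convex_efunD:
  assumes "convex_efun K" and "K x \<le> ereal a" and "K y \<le> ereal b" and "0 \<le> t" and "t \<le> 1"
  shows "K (x + t *\<^sub>R (y - x)) \<le> ereal (a + t * (b - a))"
proof -
  have "(1 - t) *\<^sub>R (x, a) + t *\<^sub>R (y, b) \<in> {(x, a). K x \<le> ereal a}"
    using assms unfolding convex_efun_def by (intro convexD) auto
  moreover have "(1 - t) *\<^sub>R (x, a) + t *\<^sub>R (y, b) = (x + t *\<^sub>R (y - x), a + t * (b - a))"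
    by (simp add: algebra_simps)
  ultimately show ?thesis
    by simp
qed

lemma regular_subdiff_segment_bound:
  assumes v: "v \<in> regular_subdiff K x" and e: "0 < e"
  obtains t where "0 < t" and "t \<le> 1"
    and "K x + ereal (t * (inner v (y - x) - e * norm (y - x))) \<le> K (x + t *\<^sub>R (y - x))"
proof -
  define n where "n = norm (y - x)"
  have n: "0 \<le> n"
    by (simp add: n_def)
  obtain d where d: "d > 0" and near: "\<And>z. norm (z - x) < d \<Longrightarrow>
      K x + ereal (inner v (z - x) - e * norm (z - x)) \<le> K z"
    using v e unfolding regular_subdiff_def mem_Collect_eq by (meson conjunct2)
  define t where "t = min 1 (d / (2 * (n + 1)))"
  have t: "0 < t" "t \<le> 1"
    using d n by (auto simp: t_def)
  have "t * n \<le> d / (2 * (n + 1)) * n"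
    unfolding t_def using n by (intro mult_right_mono) auto
  also have "\<dots> < d"
  proof -
    have "d * n < d * (2 * (n + 1))"
      using d n by simp
    then show ?thesis
      using n by (simp add: field_simps)
  qed
  finally have "norm (x + t *\<^sub>R (y - x) - x) < d"
    using t by (simp add: n_def)
  moreover have "inner v (t *\<^sub>R (y - x)) - e * norm (t *\<^sub>R (y - x))
      = t * (inner v (y - x) - e * norm (y - x))"
    using t by (simp add: right_diff_distrib ac_simps)
  ultimately show ?thesis
    using near[of "x + t *\<^sub>R (y - x)"] by (intro that[OF t]) simp
qed

lemma convex_efun_regular_subdiff_imp_subgradient:
  assumes K: "convex_efun K" and v: "v \<in> regular_subdiff K x"
  shows "K x + ereal (inner v (y - x)) \<le> K y"
proof (rule ereal_le_real)
  fix b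
  assume Ky: "K y \<le> ereal b"
  obtain a where Kx: "K x = ereal a"
    using v unfolding regular_subdiff_def mem_Collect_eq by (cases "K x") auto
  define n where "n = norm (y - x)"
  have n: "0 \<le> n"
    by (simp add: n_def)
  define p where "p = inner v (y - x)"
  have "a + p \<le> b + e" if "e > 0" for e
  proof -
    have "e / (n + 1) > 0"
      using \<open>e > 0\<close> n by simp
    then obtain t where t: "0 < t" "t \<le> 1"
      and near: "K x + ereal (t * (inner v (y - x) - e / (n + 1) * n)) \<le> K (x + t *\<^sub>R (y - x))"
      unfolding n_def by (rule regular_subdiff_segment_bound[OF v])
    note near
    also have "K (x + t *\<^sub>R (y - x)) \<le> ereal (a + t * (b - a))"
      using convex_efunD[OF K _ Ky] t Kx by simp
    finally have "t * (a + p) \<le> t * (b + e / (n + 1) * n)"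
      unfolding Kx p_def[symmetric] by (simp add: algebra_simps)
    then have "a + p \<le> b + e / (n + 1) * n"
      using t by simp
    also have "e / (n + 1) * n \<le> e"
      using \<open>e > 0\<close> n by (simp add: field_simps)
    finally show ?thesis
      by simp
  qed
  then have "a + p \<le> b"
    by (rule field_le_epsilon)
  then show "K x + ereal (inner v (y - x)) \<le> ereal b"
    by (simp add: Kx p_def)
qed

lemma convex_efun_limiting_subdiff_imp_subgradient:
  assumes K: "convex_efun K" and v: "v \<in> limiting_subdiff K x"
  shows "K x + ereal (inner v (y - x)) \<le> K y"
proof -
  obtain xs vs where fin: "\<bar>K x\<bar> \<noteq> \<infinity>" and xs: "xs \<longlonglongrightarrow> x"
    and Kxs: "(\<lambda>k. K (xs k)) \<longlonglongrightarrow> K x"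
    and vs: "\<And>k. vs k \<in> regular_subdiff K (xs k)" and vs_lim: "vs \<longlonglongrightarrow> v"
    using v unfolding limiting_subdiff_def mem_Collect_eq by (elim conjE exE) auto
  have "(\<lambda>k. inner (vs k) (y - xs k)) \<longlonglongrightarrow> inner v (y - x)"
    by (intro tendsto_intros vs_lim xs)
  then have "(\<lambda>k. K (xs k) + ereal (inner (vs k) (y - xs k))) \<longlonglongrightarrow> K x + ereal (inner v (y - x))"
    by (intro tendsto_add_ereal fin Kxs) auto
  then show ?thesis
    by (rule LIMSEQ_le_const2)
      (use convex_efun_regular_subdiff_imp_subgradient[OF K vs] in auto)
qed

lemma convex_efun_SUP:
  assumes "\<And>i. i \<in> I \<Longrightarrow> convex_efun (F i)"
  shows "convex_efun (\<lambda>x. SUP i\<in>I. F i x)"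
proof -
  have "{(x, a). (SUP i\<in>I. F i x) \<le> ereal a} = (\<Inter>i\<in>I. {(x, a). F i x \<le> ereal a})"
    by (auto simp: SUP_le_iff)
  then show ?thesis
    using assms unfolding convex_efun_def by (simp add: convex_INT)
qed

lemma convex_efun_affine: "convex_efun (\<lambda>y. c + ereal (inner u y - b))"
proof (cases c)
  case (real r)
  have "{(y, a). c + ereal (inner u y - b) \<le> ereal a} = {p. inner (u, -1) p \<le> b - r}"
    using real by auto
  then show ?thesis
    unfolding convex_efun_def by (simp add: convex_halfspace_le)
next
  case PInf
  then show ?thesis
    unfolding convex_efun_def by simp
next
  case MInf
  then show ?thesis
    unfolding convex_efun_def by simp
qed

lemma conv_fun_le: "conv_fun g y \<le> g y"
  unfolding conv_fun_def by (rule SUP_least) auto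

lemma conv_fun_greatest: "convex_efun h \<Longrightarrow> (\<And>y. h y \<le> g y) \<Longrightarrow> h y \<le> conv_fun g y"
  unfolding conv_fun_def by (rule SUP_upper2[of h]) auto

lemma convex_efun_conv_fun: "convex_efun (conv_fun g)"
  unfolding conv_fun_def by (rule convex_efun_SUP) simp

lemma ereal_add_le_add_ereal_iff:
  fixes a b :: ereal
  shows "a + ereal r \<le> b + ereal s \<longleftrightarrow> a + ereal (r - s) \<le> b"
  by (cases a; cases b) auto

lemma jfun_expand: "jfun y = jfun x + inner x (y - x) + jfun (y - x)"
  unfolding jfun_def power2_norm_eq_inner
  by (simp add: inner_commute algebra_simps)

lemma regular_subdiff_add_jfun:
  assumes l: "0 < l" and v: "v \<in> regular_subdiff F x"
  shows "v + x /\<^sub>R l \<in> regular_subdiff (\<lambda>y. F y + ereal (jfun y / l)) x"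
  unfolding regular_subdiff_def
proof (intro CollectI conjI allI impI)
  have "\<bar>F x\<bar> \<noteq> \<infinity>"
    and reg: "\<forall>e>0. \<exists>d>0. \<forall>y. norm (y - x) < d \<longrightarrow>
      F x + ereal (inner v (y - x) - e * norm (y - x)) \<le> F y"
    using v unfolding regular_subdiff_def mem_Collect_eq by (rule conjunct1, rule conjunct2)
  then show "\<bar>F x + ereal (jfun x / l)\<bar> \<noteq> \<infinity>"
    by (cases "F x") auto
  fix e :: real
  assume "e > 0"
  then obtain d where d: "d > 0" and near: "\<And>y. norm (y - x) < d \<Longrightarrow>
      F x + ereal (inner v (y - x) - e * norm (y - x)) \<le> F y"
    using reg by blast
  show "\<exists>d>0. \<forall>y. norm (y - x) < d \<longrightarrow> F x + ereal (jfun x / l) +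
      ereal (inner (v + x /\<^sub>R l) (y - x) - e * norm (y - x)) \<le> F y + ereal (jfun y / l)"
  proof (intro exI[of _ d] conjI allI impI d)
    fix y
    assume "norm (y - x) < d"
    have "jfun x / l + (inner (v + x /\<^sub>R l) (y - x) - e * norm (y - x)) - jfun y / l
        = inner v (y - x) - e * norm (y - x) - jfun (y - x) / l"
      using jfun_expand[of y x] l by (simp add: inner_add_left field_simps)
    also have "\<dots> \<le> inner v (y - x) - e * norm (y - x)"
      using l by (simp add: jfun_def)
    finally have "F x + ereal (jfun x / l + (inner (v + x /\<^sub>R l) (y - x) - e * norm (y - x)) - jfun y / l)
        \<le> F y"
      using near[OF \<open>norm (y - x) < d\<close>] by (meson add_left_mono ereal_less_eq(3) order_trans)
    then show "F x + ereal (jfun x / l) + ereal (inner (v + x /\<^sub>R l) (y - x) - e * norm (y - x))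
        \<le> F y + ereal (jfun y / l)"
      by (simp add: add.assoc ereal_add_le_add_ereal_iff)
  qed
qed

lemma limiting_subdiff_add_jfun:
  assumes l: "0 < l" and v: "v \<in> limiting_subdiff F x"
  shows "v + x /\<^sub>R l \<in> limiting_subdiff (\<lambda>y. F y + ereal (jfun y / l)) x"
proof -
  obtain xs vs where fin: "\<bar>F x\<bar> \<noteq> \<infinity>" and xs: "xs \<longlonglongrightarrow> x"
    and Fxs: "(\<lambda>k. F (xs k)) \<longlonglongrightarrow> F x"
    and vs: "\<And>k. vs k \<in> regular_subdiff F (xs k)" and vs_lim: "vs \<longlonglongrightarrow> v"
    using v unfolding limiting_subdiff_def mem_Collect_eq by (elim conjE exE) auto
  have "(\<lambda>k. jfun (xs k) / l) \<longlonglongrightarrow> jfun x / l"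
    unfolding jfun_def by (intro tendsto_intros xs) (use l in simp)
  then have Gxs: "(\<lambda>k. F (xs k) + ereal (jfun (xs k) / l)) \<longlonglongrightarrow> F x + ereal (jfun x / l)"
    by (intro tendsto_add_ereal fin Fxs) auto
  have ws_lim: "(\<lambda>k. vs k + xs k /\<^sub>R l) \<longlonglongrightarrow> v + x /\<^sub>R l"
    by (intro tendsto_intros vs_lim xs)
  have "\<bar>F x + ereal (jfun x / l)\<bar> \<noteq> \<infinity>"
    using fin by (cases "F x") auto
  then show ?thesis
    unfolding limiting_subdiff_def
    by (intro CollectI conjI exI[of _ xs] exI[of _ "\<lambda>k. vs k + xs k /\<^sub>R l"] allI
        xs Gxs ws_lim regular_subdiff_add_jfun[OF l vs])
qed

lemma prox_subdiff_iff_affine_minorant: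
  assumes "0 < l"
  shows "v \<in> prox_subdiff l f x \<longleftrightarrow>
    (\<forall>y. f x + ereal (jfun x / l + inner (v + x /\<^sub>R l) (y - x)) \<le> f y + ereal (jfun y / l))"
proof -
  have "jfun x / l + inner (v + x /\<^sub>R l) (y - x) - jfun y / l
      = inner v (y - x) - (1 / (2 * l)) * (norm (y - x))\<^sup>2" for y
    using jfun_expand[of y x] assms by (simp add: inner_add_left jfun_def field_simps)
  then have "f x + ereal (jfun x / l + inner (v + x /\<^sub>R l) (y - x)) \<le> f y + ereal (jfun y / l)
      \<longleftrightarrow> f x + ereal (inner v (y - x) - (1 / (2 * l)) * (norm (y - x))\<^sup>2) \<le> f y" for y
    by (simp only: ereal_add_le_add_ereal_iff)
  then show ?thesis
    unfolding prox_subdiff_def by simp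
qed

lemma prox_hull_eq_SUP:
  "prox_hull l f y = (SUP z. moreau_env l f z - ereal ((1 / (2 * l)) * (norm (z - y))\<^sup>2))"
proof -
  have "- (- moreau_env l f z + ereal q) = moreau_env l f z - ereal q" for z q
    by (cases "moreau_env l f z") auto
  then show ?thesis
    unfolding prox_hull_def moreau_env_def[of l "\<lambda>y. - moreau_env l f y"]
    by (simp add: ereal_SUP_uminus_eq[symmetric])
qed

lemma prox_hull_le: "prox_hull l f y \<le> f y"
  unfolding prox_hull_eq_SUP
proof (rule SUP_least)
  fix z
  have "moreau_env l f z \<le> f y + ereal ((1 / (2 * l)) * (norm (z - y))\<^sup>2)"
    unfolding moreau_env_def by (rule INF_lower2) (auto simp: norm_minus_commute)
  then show "moreau_env l f z - ereal ((1 / (2 * l)) * (norm (z - y))\<^sup>2) \<le> f y"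
    by (cases "f y"; cases "moreau_env l f z") auto
qed

lemma prox_hull_ge_quadratic_minorant:
  assumes "\<And>w. ereal (a - (1 / (2 * l)) * (norm (w - z))\<^sup>2) \<le> f w"
  shows "ereal (a - (1 / (2 * l)) * (norm (y - z))\<^sup>2) \<le> prox_hull l f y"
proof -
  have "ereal a \<le> moreau_env l f z"
    unfolding moreau_env_def
  proof (rule INF_greatest)
    fix w
    show "ereal a \<le> f w + ereal ((1 / (2 * l)) * (norm (w - z))\<^sup>2)"
      using assms[of w] by (cases "f w") auto
  qed
  then have "ereal (a - (1 / (2 * l)) * (norm (y - z))\<^sup>2)
      \<le> moreau_env l f z - ereal ((1 / (2 * l)) * (norm (z - y))\<^sup>2)"
    by (cases "moreau_env l f z") (auto simp: norm_minus_commute)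
  then show ?thesis
    unfolding prox_hull_eq_SUP by (rule SUP_upper2[OF UNIV_I])
qed

lemma prox_hull_plus_jfun_eq_SUP:
  assumes "0 < l"
  shows "prox_hull l f y + ereal (jfun y / l)
    = (SUP z. moreau_env l f z + ereal (inner (z /\<^sub>R l) y - jfun z / l))"
proof -
  have shift: "e - ereal q + ereal r = e + ereal (r - q)" for e :: ereal and q r
    by (cases e) auto
  have "jfun y / l - (1 / (2 * l)) * (norm (z - y))\<^sup>2 = inner (z /\<^sub>R l) y - jfun z / l" for z
    using assms unfolding jfun_def
    by (simp add: power2_norm_eq_inner inner_diff_left inner_diff_right inner_commute field_simps)
  then have "moreau_env l f z - ereal ((1 / (2 * l)) * (norm (z - y))\<^sup>2) + ereal (jfun y / l)
      = moreau_env l f z + ereal (inner (z /\<^sub>R l) y - jfun z / l)" for z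
    unfolding shift by simp
  then show ?thesis
    unfolding prox_hull_eq_SUP by (subst SUP_ereal_add_left[symmetric]) auto
qed

lemma convex_efun_prox_hull_plus_jfun:
  assumes "0 < l"
  shows "convex_efun (\<lambda>y. prox_hull l f y + ereal (jfun y / l))"
  unfolding prox_hull_plus_jfun_eq_SUP[OF assms]
  by (intro convex_efun_SUP convex_efun_affine)

lemma prox_subdiff_imp_regular_subdiff_prox_hull:
  assumes l: "0 < l" and fin: "\<bar>f x\<bar> \<noteq> \<infinity>" and v: "v \<in> prox_subdiff l f x"
  shows "prox_hull l f x = f x \<and> v \<in> regular_subdiff (prox_hull l f) x"
proof -
  obtain a where fx: "f x = ereal a"
    using fin by (cases "f x") auto
  define z where "z = x + l *\<^sub>R v"
  have square: "a + inner v (w - x) - (1 / (2 * l)) * (norm (w - x))\<^sup>2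
      = (a + l / 2 * (norm v)\<^sup>2) - (1 / (2 * l)) * (norm (w - z))\<^sup>2" for w
    unfolding z_def using l
    by (simp add: power2_norm_eq_inner inner_diff_left inner_diff_right inner_add_left
        inner_add_right inner_commute field_simps)
  have "ereal ((a + l / 2 * (norm v)\<^sup>2) - (1 / (2 * l)) * (norm (w - z))\<^sup>2) \<le> f w" for w
    using v fx unfolding prox_subdiff_def square[symmetric] by (simp add: add_diff_eq)
  then have below: "ereal (a + inner v (y - x) - (1 / (2 * l)) * (norm (y - x))\<^sup>2) \<le> prox_hull l f y" for y
    unfolding square by (rule prox_hull_ge_quadratic_minorant)
  have hx: "prox_hull l f x = f x"
    using below[of x] prox_hull_le[of l f x] fx by simp
  have "v \<in> regular_subdiff (prox_hull l f) x"
    by (rule quadratic_minorant_imp_regular_subdiff[of "1 / (2 * l)"])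
      (use l hx fx below in \<open>simp_all add: add_diff_eq\<close>)
  with hx show ?thesis ..
qed

lemma prox_subdiff_imp_regular_subdiff_conv_fun:
  assumes l: "0 < l" and fin: "\<bar>f x\<bar> \<noteq> \<infinity>" and v: "v \<in> prox_subdiff l f x"
  shows "conv_fun (\<lambda>y. f y + ereal (jfun y / l)) x = f x + ereal (jfun x / l)
    \<and> v + x /\<^sub>R l \<in> regular_subdiff (conv_fun (\<lambda>y. f y + ereal (jfun y / l))) x"
    (is "conv_fun ?g x = ?g x \<and> _")
proof -
  define g where "g = ?g"
  define u where "u = v + x /\<^sub>R l"
  define L where "L = (\<lambda>y. (f x + ereal (jfun x / l)) + ereal (inner u y - inner u x))"
  have "L y \<le> g y" for y
    using v l unfolding prox_subdiff_iff_affine_minorant[OF l] L_def g_def u_def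
    by (simp add: add.assoc inner_diff_right)
  then have L_le: "L y \<le> conv_fun g y" for y
    unfolding L_def by (intro conv_fun_greatest convex_efun_affine) (simp add: L_def)
  have gx: "conv_fun g x = g x"
    using L_le[of x] conv_fun_le[of g x] unfolding L_def g_def by simp
  have gx_fin: "\<bar>g x\<bar> \<noteq> \<infinity>"
    using fin unfolding g_def by (cases "f x") auto
  have "u \<in> regular_subdiff (conv_fun g) x"
    by (rule quadratic_minorant_imp_regular_subdiff[of 0])
      (use gx_fin L_le gx in \<open>simp_all add: L_def g_def inner_diff_right\<close>)
  with gx show ?thesis
    unfolding u_def g_def by simp
qed

lemma prox_subdiff_of_touching_convex_minorant:
  assumes l: "0 < l" and K: "convex_efun K"
    and below: "\<And>y. K y \<le> f y + ereal (jfun y / l)" and touch: "K x = f x + ereal (jfun x / l)"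
    and w: "w \<in> limiting_subdiff K x"
  shows "w - x /\<^sub>R l \<in> prox_subdiff l f x"
  unfolding prox_subdiff_iff_affine_minorant[OF l]
proof
  fix y
  have "f x + ereal (jfun x / l + inner w (y - x)) = K x + ereal (inner w (y - x))"
    by (simp add: touch add.assoc)
  also have "\<dots> \<le> K y"
    by (rule convex_efun_limiting_subdiff_imp_subgradient[OF K w])
  finally show "f x + ereal (jfun x / l + inner (w - x /\<^sub>R l + x /\<^sub>R l) (y - x))
      \<le> f y + ereal (jfun y / l)"
    using below[of y] by simp
qed

lemma prox_subdiff_nonempty_iff_prox_hull:
  assumes l: "0 < l" and fin: "\<bar>f x\<bar> \<noteq> \<infinity>"
  shows "prox_subdiff l f x \<noteq> {} \<longleftrightarrow> prox_hull l f x = f x \<and> x \<in> dom_subdiff (prox_hull l f)"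
proof
  assume "prox_subdiff l f x \<noteq> {}"
  then obtain v where "v \<in> prox_subdiff l f x"
    by blast
  then show "prox_hull l f x = f x \<and> x \<in> dom_subdiff (prox_hull l f)"
    using prox_subdiff_imp_regular_subdiff_prox_hull[of l f x, OF l fin] regular_subdiff_imp_dom_subdiff
    by blast
next
  assume hx: "prox_hull l f x = f x \<and> x \<in> dom_subdiff (prox_hull l f)"
  then obtain w where "w \<in> limiting_subdiff (prox_hull l f) x"
    unfolding dom_subdiff_def by blast
  then have w: "w + x /\<^sub>R l \<in> limiting_subdiff (\<lambda>y. prox_hull l f y + ereal (jfun y / l)) x"
    by (rule limiting_subdiff_add_jfun[OF l])
  have below: "prox_hull l f y + ereal (jfun y / l) \<le> f y + ereal (jfun y / l)" for y
    using prox_hull_le by (rule add_right_mono)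
  have touch: "prox_hull l f x + ereal (jfun x / l) = f x + ereal (jfun x / l)"
    using hx by simp
  have "w + x /\<^sub>R l - x /\<^sub>R l \<in> prox_subdiff l f x"
    by (rule prox_subdiff_of_touching_convex_minorant
        [OF l convex_efun_prox_hull_plus_jfun[OF l] below touch w])
  then show "prox_subdiff l f x \<noteq> {}"
    by blast
qed

lemma prox_subdiff_nonempty_iff_conv_fun:
  assumes l: "0 < l" and fin: "\<bar>f x\<bar> \<noteq> \<infinity>"
  shows "prox_subdiff l f x \<noteq> {} \<longleftrightarrow>
    conv_fun (\<lambda>y. f y + ereal (jfun y / l)) x = f x + ereal (jfun x / l)
    \<and> x \<in> dom_subdiff (conv_fun (\<lambda>y. f y + ereal (jfun y / l)))"
proof
  assume "prox_subdiff l f x \<noteq> {}"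
  then obtain v where "v \<in> prox_subdiff l f x"
    by blast
  then show "conv_fun (\<lambda>y. f y + ereal (jfun y / l)) x = f x + ereal (jfun x / l)
      \<and> x \<in> dom_subdiff (conv_fun (\<lambda>y. f y + ereal (jfun y / l)))"
    using prox_subdiff_imp_regular_subdiff_conv_fun[of l f x, OF l fin] regular_subdiff_imp_dom_subdiff
    by blast
next
  assume cx: "conv_fun (\<lambda>y. f y + ereal (jfun y / l)) x = f x + ereal (jfun x / l)
      \<and> x \<in> dom_subdiff (conv_fun (\<lambda>y. f y + ereal (jfun y / l)))"
  then obtain w where "w \<in> limiting_subdiff (conv_fun (\<lambda>y. f y + ereal (jfun y / l))) x"
    unfolding dom_subdiff_def by blast
  then have "w - x /\<^sub>R l \<in> prox_subdiff l f x"
    using prox_subdiff_of_touching_convex_minorant[OF l convex_efun_conv_fun conv_fun_le] cx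
    by blast
  then show "prox_subdiff l f x \<noteq> {}"
    by blast
qed

theorem mainTheorem5:
  fixes f :: "'a::euclidean_space \<Rightarrow> ereal" and l :: real and x :: 'a
  assumes "proper_fun f" and "lsc_fun f" and "prox_bounded f"
    and "prox_threshold f > 0"
    and "0 < l" and "ereal l < prox_threshold f"
    and "x \<in> edom f"
  shows "(prox_subdiff l f x \<noteq> {} \<longleftrightarrow>
            prox_hull l f x = f x \<and> x \<in> dom_subdiff (prox_hull l f))
       \<and> (prox_subdiff l f x \<noteq> {} \<longleftrightarrow>
            conv_fun (\<lambda>y. f y + ereal (jfun y / l)) x = f x + ereal (jfun x / l)
            \<and> x \<in> dom_subdiff (conv_fun (\<lambda>y. f y + ereal (jfun y / l))))"
proof -
  have fin: "\<bar>f x\<bar> \<noteq> \<infinity>"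
    using \<open>proper_fun f\<close> \<open>x \<in> edom f\<close> unfolding proper_fun_def edom_def by auto
  show ?thesis
    using prox_subdiff_nonempty_iff_prox_hull[of l f x, OF \<open>0 < l\<close> fin]
      prox_subdiff_nonempty_iff_conv_fun[of l f x, OF \<open>0 < l\<close> fin]
    by blast
qed

end
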